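(* Let $\{z_n\}_{n\ge 0}$ be a sequence of positive real numbers satisfying $a_nz_{n+1}=b_nz_n+c_nz_{n-1}$ for all $n\ge 1$, where $a_n,b_n,c_n>0$, and let $\lambda_n=\frac{b_n+\sqrt{b_n^2+4a_nc_n}}{2a_n}$ for $n\ge 1$. Suppose there exists a sequence $\{\mu_n\}_{n\ge 1}$ of positive reals such that: (i) $\mu_n\le \lambda_n$ for all $n\ge 1$; (ii) $z_1\le \mu_1z_0$ and $z_2\le \mu_2z_1$; (iii) $a_n\mu_{n-1}\mu_{n+1}\ge b_n\mu_{n-1}+c_n$ for all $n\ge 2$. Then $\{z_n\}_{n\ge 0}$ is log-convex.
   Context: A sequence $a_0,a_1,\ldots$ of nonnegative real numbers is log-convex if $a_{k-1}a_{k+1}\ge a_k^2$ for all $k\ge 1$. *)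

theory Defs
  imports Complex_Main
begin

definition log_convex :: "(nat \<Rightarrow> real) \<Rightarrow> bool" where
  "log_convex a \<longleftrightarrow> (\<forall>k. a k \<ge> 0) \<and> (\<forall>k\<ge>1. a (k - 1) * a (k + 1) \<ge> (a k)\<^sup>2)"

end

theory Submission
  imports Defs
begin

text \<open>
  The recurrence propagates bounds on the ratios z(n+1)/z(n) in two alternating ways.
  Condition (i) says that mu(n) lies below the positive root of a(n) x^2 = b(n) x + c(n),
  so an upper bound z(n) <= mu(n) z(n-1) forces the lower bound mu(n) z(n) <= z(n+1);
  condition (iii) turns a lower bound mu(n-1) z(n-1) <= z(n) into the upper bound
  z(n+1) <= mu(n+1) z(n). Starting from (ii), every ratio satisfies
  z(n+1)/z(n) <= mu(n+1) <= z(n+2)/z(n+1), so the ratios are nondecreasing.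
\<close>

lemma quadratic_le_if_le_pos_root:
  fixes A B C m :: real
  assumes "A > 0" "C \<ge> 0" "m \<ge> 0"
    and m_le_root: "m \<le> (B + sqrt (B\<^sup>2 + 4 * A * C)) / (2 * A)"
  shows "A * m\<^sup>2 \<le> B * m + C"
proof (cases "2 * A * m \<le> B")
  case True
  moreover have "A * m \<ge> 0"
    using assms by simp
  ultimately have "m * (A * m - B) \<le> 0"
    using \<open>m \<ge> 0\<close> by (intro mult_nonneg_nonpos) auto
  then show ?thesis
    using \<open>C \<ge> 0\<close> by (simp add: power2_eq_square algebra_simps)
next
  case False
  have "2 * A * m - B \<le> sqrt (B\<^sup>2 + 4 * A * C)"
    using m_le_root \<open>A > 0\<close> by (simp add: field_simps)
  then have "(2 * A * m - B)\<^sup>2 \<le> (sqrt (B\<^sup>2 + 4 * A * C))\<^sup>2"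
    using False by (intro power_mono) auto
  also have "\<dots> = B\<^sup>2 + 4 * A * C"
    using assms by simp
  finally have "4 * A * (A * m\<^sup>2 - B * m - C) \<le> 0"
    by (simp add: power2_eq_square algebra_simps)
  then show ?thesis
    using \<open>A > 0\<close> by (simp add: mult_le_0_iff)
qed

lemma recurrence_ratio_lower_bound:
  fixes a b c mu z\<^sub>0 z\<^sub>1 z\<^sub>2 :: real
  assumes rec: "a * z\<^sub>2 = b * z\<^sub>1 + c * z\<^sub>0"
    and "a > 0" "c \<ge> 0" "mu > 0" "z\<^sub>1 \<ge> 0"
    and quadratic: "a * mu\<^sup>2 \<le> b * mu + c"
    and upper: "z\<^sub>1 \<le> mu * z\<^sub>0"
  shows "mu * z\<^sub>1 \<le> z\<^sub>2"
proof -
  have "mu * (a * (mu * z\<^sub>1)) = (a * mu\<^sup>2) * z\<^sub>1"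
    by (simp add: power2_eq_square)
  also have "\<dots> \<le> (b * mu + c) * z\<^sub>1"
    using quadratic \<open>z\<^sub>1 \<ge> 0\<close> by (rule mult_right_mono)
  also have "\<dots> \<le> mu * (b * z\<^sub>1) + c * (mu * z\<^sub>0)"
    using upper \<open>c \<ge> 0\<close> by (simp add: mult_left_mono algebra_simps)
  also have "\<dots> = mu * (a * z\<^sub>2)"
    using rec by (simp add: algebra_simps)
  finally show ?thesis
    using \<open>a > 0\<close> \<open>mu > 0\<close> by simp
qed

lemma recurrence_ratio_upper_bound:
  fixes a b c mu\<^sub>0 mu\<^sub>2 z\<^sub>0 z\<^sub>1 z\<^sub>2 :: real
  assumes rec: "a * z\<^sub>2 = b * z\<^sub>1 + c * z\<^sub>0"
    and "a > 0" "c \<ge> 0" "mu\<^sub>0 > 0" "z\<^sub>1 \<ge> 0"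
    and mu_step: "b * mu\<^sub>0 + c \<le> a * mu\<^sub>0 * mu\<^sub>2"
    and lower: "mu\<^sub>0 * z\<^sub>0 \<le> z\<^sub>1"
  shows "z\<^sub>2 \<le> mu\<^sub>2 * z\<^sub>1"
proof -
  have "mu\<^sub>0 * (a * z\<^sub>2) = mu\<^sub>0 * (b * z\<^sub>1) + c * (mu\<^sub>0 * z\<^sub>0)"
    using rec by (simp add: algebra_simps)
  also have "\<dots> \<le> (b * mu\<^sub>0 + c) * z\<^sub>1"
    using lower \<open>c \<ge> 0\<close> by (simp add: mult_left_mono algebra_simps)
  also have "\<dots> \<le> (a * mu\<^sub>0 * mu\<^sub>2) * z\<^sub>1"
    using mu_step \<open>z\<^sub>1 \<ge> 0\<close> by (rule mult_right_mono)
  also have "\<dots> = mu\<^sub>0 * (a * (mu\<^sub>2 * z\<^sub>1))"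
    by (simp add: algebra_simps)
  finally show ?thesis
    using \<open>a > 0\<close> \<open>mu\<^sub>0 > 0\<close> by simp
qed

lemma log_convex_if_ratio_bounds:
  fixes z r :: "nat \<Rightarrow> real"
  assumes nonneg: "\<And>n. z n \<ge> 0"
    and upper: "\<And>n. z (n + 1) \<le> r n * z n"
    and lower: "\<And>n. r n * z (n + 1) \<le> z (n + 2)"
  shows "log_convex z"
  unfolding log_convex_def
proof (intro conjI allI impI)
  fix k :: nat
  assume "k \<ge> 1"
  then obtain n where k: "k = n + 1"
    by (metis add.commute le_Suc_ex)
  have "(z (n + 1))\<^sup>2 = z (n + 1) * z (n + 1)"
    by (simp add: power2_eq_square)
  also have "\<dots> \<le> (r n * z n) * z (n + 1)"
    using upper nonneg by (rule mult_right_mono)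
  also have "\<dots> = z n * (r n * z (n + 1))"
    by (simp add: algebra_simps)
  also have "\<dots> \<le> z n * z (n + 2)"
    using lower nonneg by (rule mult_left_mono)
  finally show "(z k)\<^sup>2 \<le> z (k - 1) * z (k + 1)"
    by (simp add: k add.assoc)
qed (use nonneg in auto)

theorem theorem3p4:
  fixes z a b c mu :: "nat \<Rightarrow> real"
  assumes z_pos: "\<And>n. z n > 0"
    and abc_pos: "\<And>n. n \<ge> 1 \<Longrightarrow> a n > 0 \<and> b n > 0 \<and> c n > 0"
    and rec: "\<And>n. n \<ge> 1 \<Longrightarrow> a n * z (n + 1) = b n * z n + c n * z (n - 1)"
    and mu_pos: "\<And>n. n \<ge> 1 \<Longrightarrow> mu n > 0"
    and i: "\<And>n. n \<ge> 1 \<Longrightarrow> mu n \<le> (b n + sqrt ((b n)\<^sup>2 + 4 * a n * c n)) / (2 * a n)"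
    and ii: "z 1 \<le> mu 1 * z 0" "z 2 \<le> mu 2 * z 1"
    and iii: "\<And>n. n \<ge> 2 \<Longrightarrow> a n * mu (n - 1) * mu (n + 1) \<ge> b n * mu (n - 1) + c n"
  shows "log_convex z"
proof -
  have lower: "mu (n + 1) * z (n + 1) \<le> z (n + 2)"
    if upper_n: "z (n + 1) \<le> mu (n + 1) * z n" for n
  proof -
    have coeffs: "a (n + 1) > 0" "b (n + 1) > 0" "c (n + 1) > 0" "mu (n + 1) > 0"
      using abc_pos[of "n + 1"] mu_pos[of "n + 1"] by auto
    have rec_n: "a (n + 1) * z (n + 2) = b (n + 1) * z (n + 1) + c (n + 1) * z n"
      using rec[of "n + 1"] by (simp add: numeral_2_eq_2)
    have "a (n + 1) * (mu (n + 1))\<^sup>2 \<le> b (n + 1) * mu (n + 1) + c (n + 1)"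
      using coeffs i[of "n + 1"] by (intro quadratic_le_if_le_pos_root) auto
    then show ?thesis
      using recurrence_ratio_lower_bound[OF rec_n] coeffs z_pos[of "n + 1"] upper_n by simp
  qed
  have upper: "z (n + 1) \<le> mu (n + 1) * z n" for n
  proof (induction n rule: nat_induct2)
    case (step n)
    have coeffs: "a (n + 2) > 0" "c (n + 2) > 0" "mu (n + 1) > 0"
      using abc_pos[of "n + 2"] mu_pos[of "n + 1"] by auto
    have rec_n: "a (n + 2) * z (n + 3) = b (n + 2) * z (n + 2) + c (n + 2) * z (n + 1)"
      using rec[of "n + 2"] by (simp add: numeral_3_eq_3 numeral_2_eq_2)
    have "b (n + 2) * mu (n + 1) + c (n + 2) \<le> a (n + 2) * mu (n + 1) * mu (n + 3)"
      using iii[of "n + 2"] by (simp add: numeral_3_eq_3 numeral_2_eq_2)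
    then have "z (n + 3) \<le> mu (n + 3) * z (n + 2)"
      using recurrence_ratio_upper_bound[OF rec_n] coeffs z_pos[of "n + 2"] lower[OF step] by simp
    then show ?case
      by (simp add: numeral_3_eq_3 numeral_2_eq_2)
  qed (use ii in \<open>simp_all add: numeral_2_eq_2\<close>)
  show ?thesis
    using less_imp_le[OF z_pos] upper lower[OF upper] by (rule log_convex_if_ratio_bounds)
qed

end
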